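(* Let $N\ge M\ge 1$, let $\beta$, $a$ (with Hölder exponent $\theta_1$), $f_0$ (with Hölder exponent $\theta_2$) and $dq_0$ be as in the context, with $dq_0$ satisfying condition (B) and $\int_{|z|<1}|z|^{\gamma}dq_0+\int_{|z|\ge1}|z|^{\gamma-1}dq_0<\infty$ ($\gamma=2$ in case (I), $\gamma=1$ in case (II)). For $\lambda>0$ let $v_\lambda$ be the periodic viscosity solution of (I) $\lambda v_\lambda-a(y)\int_{\mathbb{R}^M}[v_\lambda(y+\beta(z))-v_\lambda(y)-\langle\nabla v_\lambda(y),\beta(z)\rangle]dq_0(z)-f_0(y)=0$ in $\mathbb{T}^N$ (resp. (II), the same without the gradient term), and set $m_\lambda=\lambda v_\lambda$. Then: (i) there is a constant $M_0>0$ such that $\|m_\lambda\|_{L^\infty}\le M_0$ for all $\lambda\in(0,1)$; (ii) for every $\theta\in(0,\min\{\theta_1,\theta_2\})$ there is a constant $C_\theta>0$ such that $|m_\lambda(y)-m_\lambda(y')|\le C_\theta|y-y'|^{\theta}$ for all $y,y'\in\mathbb{T}^N$ and all $\lambda\in(0,1)$. The constants $M_0$ and $C_\theta$ do not depend on $\lambda\in(0,1)$.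
   Context: $\mathbb{T}^N=[0,1]^N$; functions on it are $\mathbb{Z}^N$-periodic on $\mathbb{R}^N$. $\beta:\mathbb{R}^M\to\mathbb{R}^N$ continuous, $\beta(cz)=c\beta(z)$ for $c>0$, $|\beta(z)|\le B_1|z|$. $a$ continuous, periodic, $a\ge a_0>0$, $|a(y)-a(y')|\le L|y-y'|^{\theta_1}$, $\theta_1\in(0,1]$. $f_0$ periodic with $|f_0(y)-f_0(y')|\le L|y-y'|^{\theta_2}$, $\theta_2\in(0,1]$. $dq_0$ positive Radon measure on $\mathbb{R}^M$. Condition (B): with $S_0=\mathrm{supp}(dq_0)$, for any $y,y'\in\mathbb{T}^N$ there exist $y_1=y,\dots,y_m=y'$ such that for any $\varepsilon_i>0$ there are $J_i\subset S_0$ with $y_i+\beta(z)\in B_{\varepsilon_i}(y_{i+1})$ (mod $\mathbb{Z}^N$) for $z\in J_i$ and $\int_{J_i}dq_0>0$. Viscosity solutions are understood via test functions: at a global max (resp. min) of $u-\phi$, $\phi\in C^2$, $u(\hat y)=\phi(\hat y)$, the equation holds with "$\le$" (resp. "$\ge$") when $\nabla u(\hat y)$ is replaced by $\nabla\phi(\hat y)$ in the (integrable) integrand. *)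

theory Defs
  imports "HOL-Analysis.Analysis"
begin

definition zperiodic :: "(real^'n \<Rightarrow> real) \<Rightarrow> bool" where
  "zperiodic u \<longleftrightarrow> (\<forall>y k. (\<forall>i. k $ i \<in> \<int>) \<longrightarrow> u (y + k) = u y)"

definition torus :: "(real^'n) set" where
  "torus = cbox 0 One"

definition is_C2 :: "(real^'n \<Rightarrow> real) \<Rightarrow> (real^'n \<Rightarrow> real^'n) \<Rightarrow> ('n \<Rightarrow> real^'n \<Rightarrow> real^'n) \<Rightarrow> bool" where
  "is_C2 \<phi> g h \<longleftrightarrow>
     (\<forall>x. (\<phi> has_derivative (\<lambda>v. g x \<bullet> v)) (at x)) \<and>
     (\<forall>x i. ((\<lambda>x. g x $ i) has_derivative (\<lambda>v. h i x \<bullet> v)) (at x)) \<and>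
     (\<forall>i. continuous_on UNIV (h i))"

text \<open>Integrand of the nonlocal operator; the flag grad selects case (I)
  (with gradient term) or case (II) (without).\<close>
definition nl_integrand ::
  "bool \<Rightarrow> (real^'m \<Rightarrow> real^'n) \<Rightarrow> (real^'n \<Rightarrow> real) \<Rightarrow> real^'n \<Rightarrow> real^'n \<Rightarrow> real^'m \<Rightarrow> real" where
  "nl_integrand grad \<beta> u p y z =
     u (y + \<beta> z) - u y - (if grad then p \<bullet> \<beta> z else 0)"

definition visc_sub ::
  "bool \<Rightarrow> (real^'m \<Rightarrow> real^'n) \<Rightarrow> (real^'n \<Rightarrow> real) \<Rightarrow> (real^'n \<Rightarrow> real) \<Rightarrow> (real^'m) measure
   \<Rightarrow> real \<Rightarrow> (real^'n \<Rightarrow> real) \<Rightarrow> bool" where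
  "visc_sub grad \<beta> a f q lam u \<longleftrightarrow>
    (\<forall>\<phi> g h yh. is_C2 \<phi> g h \<and> (\<forall>y. u y - \<phi> y \<le> u yh - \<phi> yh) \<and> u yh = \<phi> yh \<longrightarrow>
       integrable q (nl_integrand grad \<beta> u (g yh) yh) \<and>
       lam * u yh - a yh * (\<integral>z. nl_integrand grad \<beta> u (g yh) yh z \<partial>q) - f yh \<le> 0)"

definition visc_super ::
  "bool \<Rightarrow> (real^'m \<Rightarrow> real^'n) \<Rightarrow> (real^'n \<Rightarrow> real) \<Rightarrow> (real^'n \<Rightarrow> real) \<Rightarrow> (real^'m) measure
   \<Rightarrow> real \<Rightarrow> (real^'n \<Rightarrow> real) \<Rightarrow> bool" where
  "visc_super grad \<beta> a f q lam u \<longleftrightarrow>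
    (\<forall>\<phi> g h yh. is_C2 \<phi> g h \<and> (\<forall>y. u y - \<phi> y \<ge> u yh - \<phi> yh) \<and> u yh = \<phi> yh \<longrightarrow>
       integrable q (nl_integrand grad \<beta> u (g yh) yh) \<and>
       lam * u yh - a yh * (\<integral>z. nl_integrand grad \<beta> u (g yh) yh z \<partial>q) - f yh \<ge> 0)"

definition periodic_visc_sol ::
  "bool \<Rightarrow> (real^'m \<Rightarrow> real^'n) \<Rightarrow> (real^'n \<Rightarrow> real) \<Rightarrow> (real^'n \<Rightarrow> real) \<Rightarrow> (real^'m) measure
   \<Rightarrow> real \<Rightarrow> (real^'n \<Rightarrow> real) \<Rightarrow> bool" where
  "periodic_visc_sol grad \<beta> a f q lam u \<longleftrightarrow>
     continuous_on UNIV u \<and> zperiodic u \<and>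
     visc_sub grad \<beta> a f q lam u \<and> visc_super grad \<beta> a f q lam u"

definition msupport :: "(real^'m) measure \<Rightarrow> (real^'m) set" where
  "msupport q = {z. \<forall>e>0. emeasure q (ball z e) > 0}"

definition condB :: "(real^'m \<Rightarrow> real^'n) \<Rightarrow> (real^'m) measure \<Rightarrow> bool" where
  "condB \<beta> q \<longleftrightarrow>
    (\<forall>y \<in> torus. \<forall>y' \<in> torus. \<exists>ys. ys \<noteq> [] \<and> hd ys = y \<and> last ys = y' \<and>
       (\<forall>i. Suc i < length ys \<longrightarrow> (\<forall>e>0. \<exists>J. J \<in> sets q \<and> J \<subseteq> msupport q \<and>
           emeasure q J > 0 \<and>
           (\<forall>z\<in>J. \<exists>k. (\<forall>j. k $ j \<in> \<int>) \<and> dist (ys ! i + \<beta> z) (ys ! Suc i + k) < e))))"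

end

theory Submission
  imports Defs
begin

text \<open>
  Write \<open>m = \<lambda> v\<^sub>\<lambda>\<close>. The sup bound is the maximum principle: at a global maximum of the
  periodic solution the nonlocal term is nonpositive, so \<open>m \<le> sup f\<^sub>0\<close>, and symmetrically at
  a minimum.

  For the Hoelder bound fix an increment \<open>h\<close> and maximise \<open>v(x) - v(x - w) - s |w - h|\<^sup>2\<close>
  over \<open>x, w\<close>; with \<open>s = sup |m| / (\<lambda> |h|\<^sup>2)\<close> the maximiser \<open>(x\<^sub>0, w\<^sub>0)\<close> satisfies
  \<open>|w\<^sub>0| \<le> 3|h|\<close>. Since the penalty does not depend on \<open>x\<close>, the paraboloids touching \<open>v\<close> from
  above at \<open>x\<^sub>0\<close> and from below at \<open>x\<^sub>0 - w\<^sub>0\<close> have the same gradient, and maximality in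
  \<open>x\<close> orders the two nonlocal integrands pointwise. Dividing the sub- and supersolution
  inequalities by \<open>a\<close> and subtracting leaves only the oscillations of \<open>f\<^sub>0\<close> and \<open>a\<close> over a
  distance \<open>3|h|\<close>, which are Hoelder.
\<close>

lemma torus_representative:
  fixes y :: "real^'n"
  obtains k where "\<forall>i. k $ i \<in> \<int>" "y - k \<in> torus"
proof
  let ?k = "(\<chi> i. of_int \<lfloor>y $ i\<rfloor>) :: real^'n"
  show "\<forall>i. ?k $ i \<in> \<int>" by simp
  have "0 \<le> r - of_int \<lfloor>r\<rfloor> \<and> r - of_int \<lfloor>r\<rfloor> \<le> 1" for r :: real
    by linarith
  then show "y - ?k \<in> torus"
    unfolding torus_def mem_box_cart by (simp add: Cart_1[symmetric] one_index)
qed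

lemma zero_in_torus: "(0::real^'n) \<in> torus"
  unfolding torus_def mem_box_cart by (simp add: Cart_1[symmetric] one_index)

lemma compact_torus: "compact (torus :: (real^'n) set)"
  unfolding torus_def by simp

lemma zperiodic_diff_lattice:
  assumes "zperiodic u" "\<forall>i. k $ i \<in> \<int>"
  shows "u (y - k) = u y"
  using assms unfolding zperiodic_def by (metis diff_add_cancel)

lemma zperiodic_attains_max:
  fixes u :: "real^'n \<Rightarrow> real"
  assumes "continuous_on UNIV u" "zperiodic u"
  obtains y0 where "\<And>y. u y \<le> u y0"
proof -
  have "continuous_on torus u" using assms(1) by (rule continuous_on_subset) simp
  then obtain y0 where y0: "\<forall>y\<in>torus. u y \<le> u y0"
    using continuous_attains_sup[OF compact_torus] zero_in_torus by blast
  have "u y \<le> u y0" for y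
  proof -
    obtain k where k: "\<forall>i. k $ i \<in> \<int>" "y - k \<in> torus" by (rule torus_representative)
    then show ?thesis using y0 zperiodic_diff_lattice[OF assms(2) k(1), of y] by force
  qed
  then show thesis by (rule that)
qed

lemma zperiodic_hoelder_bounded:
  fixes f :: "real^'n \<Rightarrow> real"
  assumes "zperiodic f" "\<And>y y'. \<bar>f y - f y'\<bar> \<le> L * norm (y - y') powr \<theta>" "\<theta> \<ge> 0"
  obtains F where "\<And>y. \<bar>f y\<bar> \<le> F"
proof -
  obtain R where R: "\<forall>y\<in>(torus :: (real^'n) set). norm y \<le> R"
    using compact_imp_bounded[OF compact_torus] unfolding bounded_iff by blast
  have "\<bar>f y\<bar> \<le> \<bar>f 0\<bar> + \<bar>L\<bar> * R powr \<theta>" for y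
  proof -
    obtain k where k: "\<forall>i. k $ i \<in> \<int>" "y - k \<in> torus" by (rule torus_representative)
    have "\<bar>f (y - k) - f 0\<bar> \<le> L * norm (y - k) powr \<theta>" using assms(2)[of "y - k" 0] by simp
    also have "\<dots> \<le> \<bar>L\<bar> * R powr \<theta>"
      by (intro mult_mono powr_mono2) (use R k assms(3) in auto)
    finally show ?thesis using zperiodic_diff_lattice[OF assms(1) k(1), of y] by linarith
  qed
  then show thesis by (rule that)
qed

lemma hoelder_constant_nonneg:
  fixes f :: "real^'n \<Rightarrow> real"
  assumes "\<And>y y'. \<bar>f y - f y'\<bar> \<le> L * norm (y - y') powr \<theta>"
  shows "L \<ge> 0"
proof -
  have "(1::real^'n) \<noteq> 0" by (metis one_index zero_index zero_neq_one)
  then have "norm (1::real^'n) powr \<theta> > 0" by simp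
  moreover have "0 \<le> L * norm ((1::real^'n) - 0) powr \<theta>"
    using assms[of 1 0] by (meson abs_ge_zero order_trans)
  ultimately show ?thesis by (simp add: zero_le_mult_iff)
qed

lemma is_C2_const: "is_C2 (\<lambda>x::real^'n. c) (\<lambda>x. 0) (\<lambda>i x. 0)"
  unfolding is_C2_def by (auto intro!: derivative_eq_intros)

lemma is_C2_paraboloid:
  fixes b :: "real^'n"
  shows "is_C2 (\<lambda>x. c + s * (norm (x - b))\<^sup>2) (\<lambda>x. (2 * s) *\<^sub>R (x - b)) (\<lambda>i x. (2 * s) *\<^sub>R axis i 1)"
  unfolding is_C2_def
proof (intro conjI allI)
  fix x :: "real^'n"
  have "((\<lambda>x. x - b) has_derivative (\<lambda>v. v)) (at x)"
    by (auto intro!: derivative_eq_intros)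
  from has_derivative_compose[OF this has_derivative_sqnorm_at[of "x - b"]]
  have "((\<lambda>x. (norm (x - b))\<^sup>2) has_derivative (\<lambda>v. 2 *\<^sub>R ((x - b) \<bullet> v))) (at x)"
    by simp
  then have "((\<lambda>x. c + s * (norm (x - b))\<^sup>2) has_derivative (\<lambda>v. 0 + s * (2 *\<^sub>R ((x - b) \<bullet> v)))) (at x)"
    by (intro has_derivative_add has_derivative_const has_derivative_mult_right)
  then show "((\<lambda>x. c + s * (norm (x - b))\<^sup>2) has_derivative (\<lambda>v. (2 * s) *\<^sub>R (x - b) \<bullet> v)) (at x)"
    by (simp add: algebra_simps)
next
  fix x :: "real^'n" and i
  have "((\<lambda>v. (2 * s) * (axis i (1::real) \<bullet> v) - (2 * s) * b $ i)
          has_derivative (\<lambda>v. (2 * s) * (axis i 1 \<bullet> v) - 0)) (at x)"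
    by (intro has_derivative_diff has_derivative_const has_derivative_mult_right
        bounded_linear_imp_has_derivative[OF bounded_linear_inner_right])
  then show "((\<lambda>x. ((2 * s) *\<^sub>R (x - b)) $ i) has_derivative (\<lambda>v. (2 * s) *\<^sub>R axis i 1 \<bullet> v)) (at x)"
    by (simp add: inner_axis' algebra_simps)
qed simp

lemma visc_subD:
  assumes "visc_sub grad \<beta> a f q lam u" "is_C2 \<phi> g h"
    "\<And>y. u y - \<phi> y \<le> u yh - \<phi> yh" "u yh = \<phi> yh"
  shows "integrable q (nl_integrand grad \<beta> u (g yh) yh)"
    "lam * u yh - a yh * (\<integral>z. nl_integrand grad \<beta> u (g yh) yh z \<partial>q) - f yh \<le> 0"
  using assms unfolding visc_sub_def by blast+

lemma visc_superD:
  assumes "visc_super grad \<beta> a f q lam u" "is_C2 \<phi> g h"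
    "\<And>y. u y - \<phi> y \<ge> u yh - \<phi> yh" "u yh = \<phi> yh"
  shows "integrable q (nl_integrand grad \<beta> u (g yh) yh)"
    "lam * u yh - a yh * (\<integral>z. nl_integrand grad \<beta> u (g yh) yh z \<partial>q) - f yh \<ge> 0"
  using assms unfolding visc_super_def by blast+

lemma visc_sub_at_max:
  assumes "visc_sub grad \<beta> a f q lam u" "a y0 \<ge> 0" "\<And>y. u y \<le> u y0"
  shows "lam * u y0 \<le> f y0"
proof -
  have "lam * u y0 - a y0 * (\<integral>z. nl_integrand grad \<beta> u 0 y0 z \<partial>q) - f y0 \<le> 0"
    using visc_subD(2)[OF assms(1) is_C2_const[of "u y0"]] assms(3) by simp
  moreover have "0 \<le> (\<integral>z. - nl_integrand grad \<beta> u 0 y0 z \<partial>q)"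
    by (rule Bochner_Integration.integral_nonneg) (use assms(3) in \<open>simp add: nl_integrand_def\<close>)
  then have "a y0 * (\<integral>z. nl_integrand grad \<beta> u 0 y0 z \<partial>q) \<le> 0"
    using assms(2) by (simp add: mult_nonneg_nonpos)
  ultimately show ?thesis by linarith
qed

lemma visc_super_at_min:
  assumes "visc_super grad \<beta> a f q lam u" "a y0 \<ge> 0" "\<And>y. u y0 \<le> u y"
  shows "f y0 \<le> lam * u y0"
proof -
  have "lam * u y0 - a y0 * (\<integral>z. nl_integrand grad \<beta> u 0 y0 z \<partial>q) - f y0 \<ge> 0"
    using visc_superD(2)[OF assms(1) is_C2_const[of "u y0"]] assms(3) by simp
  moreover have "0 \<le> (\<integral>z. nl_integrand grad \<beta> u 0 y0 z \<partial>q)"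
    by (rule Bochner_Integration.integral_nonneg) (use assms(3) in \<open>simp add: nl_integrand_def\<close>)
  then have "a y0 * (\<integral>z. nl_integrand grad \<beta> u 0 y0 z \<partial>q) \<ge> 0"
    using assms(2) by simp
  ultimately show ?thesis by linarith
qed

lemma periodic_visc_sol_bounded:
  fixes u :: "real^'n \<Rightarrow> real"
  assumes sol: "periodic_visc_sol grad \<beta> a f q lam u"
    and "\<And>y. a y \<ge> 0" "\<And>y. \<bar>f y\<bar> \<le> F" "lam > 0"
  shows "\<bar>lam * u y\<bar> \<le> F"
proof -
  have cont: "continuous_on UNIV u" "continuous_on UNIV (\<lambda>x. - u x)"
    and per: "zperiodic u" "zperiodic (\<lambda>x. - u x)"
    using sol by (auto simp: periodic_visc_sol_def zperiodic_def intro: continuous_intros)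
  obtain y1 where y1: "\<And>y. u y \<le> u y1" using zperiodic_attains_max[OF cont(1) per(1)] by blast
  obtain y0 where y0: "\<And>y. u y0 \<le> u y" using zperiodic_attains_max[OF cont(2) per(2)] by auto
  have "lam * u y \<le> lam * u y1" "lam * u y0 \<le> lam * u y"
    using y0 y1 \<open>lam > 0\<close> by (simp_all add: mult_left_mono)
  moreover have "lam * u y1 \<le> f y1" "f y0 \<le> lam * u y0"
    using sol y0 y1 assms(2) by (auto simp: periodic_visc_sol_def
        intro: visc_sub_at_max visc_super_at_min)
  ultimately show ?thesis using assms(3)[of y0] assms(3)[of y1] by (simp add: abs_le_iff)
qed

definition penalized_increment ::
  "(real^'n \<Rightarrow> real) \<Rightarrow> real \<Rightarrow> real^'n \<Rightarrow> real^'n \<Rightarrow> real^'n \<Rightarrow> real" where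
  "penalized_increment u s h x w = u x - u (x - w) - s * (norm (w - h))\<^sup>2"

lemma penalized_increment_attains_max:
  fixes u :: "real^'n \<Rightarrow> real"
  assumes cont: "continuous_on UNIV u" and per: "zperiodic u" and bd: "\<And>y. \<bar>u y\<bar> \<le> B"
    and "s \<ge> 0" "B \<le> s * (norm h)\<^sup>2"
  obtains x0 w0 where "\<And>x w. penalized_increment u s h x w \<le> penalized_increment u s h x0 w0"
    "norm (w0 - h) \<le> 2 * norm h"
proof -
  let ?G = "\<lambda>p. penalized_increment u s h (fst p) (snd p)"
  define S where "S = (torus :: (real^'n) set) \<times> cball h (2 * norm h)"
  have S0: "(0, h) \<in> S" unfolding S_def using zero_in_torus by simp
  have "compact S" unfolding S_def using compact_torus by (intro compact_Times) auto
  moreover have "continuous_on S ?G"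
    unfolding penalized_increment_def by (intro continuous_intros continuous_on_compose2[OF cont]) auto
  ultimately obtain p where pS: "p \<in> S" and pmax: "\<forall>p'\<in>S. ?G p' \<le> ?G p"
    using continuous_attains_sup S0 by blast
  have "?G (x, w) \<le> ?G p" for x w
  proof (cases "norm (w - h) \<le> 2 * norm h")
    case True
    obtain k where k: "\<forall>i. k $ i \<in> \<int>" "x - k \<in> torus" by (rule torus_representative)
    have "?G (x, w) = ?G (x - k, w)"
      using zperiodic_diff_lattice[OF per k(1), of x] zperiodic_diff_lattice[OF per k(1), of "x - w"]
      by (simp add: penalized_increment_def algebra_simps)
    moreover have "(x - k, w) \<in> S"
      unfolding S_def using k True by (simp add: dist_norm norm_minus_commute)
    ultimately show ?thesis using pmax by force
  next
    case False
    then have "s * (2 * norm h)\<^sup>2 \<le> s * (norm (w - h))\<^sup>2"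
      using \<open>s \<ge> 0\<close> by (intro mult_left_mono power_mono) auto
    then have "?G (x, w) \<le> ?G (0, h)"
      using bd[of x] bd[of "x - w"] bd[of 0] bd[of "-h"] \<open>B \<le> s * (norm h)\<^sup>2\<close>
      by (simp add: penalized_increment_def abs_le_iff power_mult_distrib)
    then show ?thesis using pmax S0 by force
  qed
  moreover have "norm (snd p - h) \<le> 2 * norm h"
    using pS by (auto simp: S_def dist_norm norm_minus_commute)
  ultimately show thesis using that[of "fst p" "snd p"] by simp
qed

text \<open>Both test paraboloids have gradient \<open>2s(w\<^sub>0 - h)\<close> at their touching points, so the
  gradient terms of the two integrands coincide.\<close>

lemma doubling_max_comparison:
  fixes u :: "real^'n \<Rightarrow> real"
  assumes sub: "visc_sub grad \<beta> a f q lam u" and super: "visc_super grad \<beta> a f q lam u"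
    and "a x0 > 0" "a (x0 - w0) > 0"
    and max: "\<And>x w. penalized_increment u s h x w \<le> penalized_increment u s h x0 w0"
  shows "(lam * u x0 - f x0) / a x0 \<le> (lam * u (x0 - w0) - f (x0 - w0)) / a (x0 - w0)"
proof -
  define y0 where "y0 = x0 - w0"
  define p where "p = (2 * s) *\<^sub>R (w0 - h)"
  define m where "m = penalized_increment u s h x0 w0"
  define I1 where "I1 = (\<integral>z. nl_integrand grad \<beta> u p x0 z \<partial>q)"
  define I2 where "I2 = (\<integral>z. nl_integrand grad \<beta> u p y0 z \<partial>q)"
  let ?\<phi> = "\<lambda>x. (u y0 + m) + s * (norm (x - (y0 + h)))\<^sup>2"
  have touch_above: "u x - ?\<phi> x \<le> u x0 - ?\<phi> x0" for x
    using max[of x "x - y0"] by (simp add: m_def y0_def penalized_increment_def algebra_simps)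
  have "u x0 = ?\<phi> x0" by (simp add: m_def y0_def penalized_increment_def)
  note sub_test = visc_subD[OF sub is_C2_paraboloid touch_above this]
  have "(2 * s) *\<^sub>R (x0 - (y0 + h)) = p" by (simp add: p_def y0_def algebra_simps)
  then have i1: "integrable q (nl_integrand grad \<beta> u p x0)"
    and r1: "lam * u x0 - a x0 * I1 - f x0 \<le> 0"
    using sub_test unfolding I1_def by simp_all
  let ?\<psi> = "\<lambda>y. (u x0 - m) + (- s) * (norm (y - (x0 - h)))\<^sup>2"
  have touch_below: "u y - ?\<psi> y \<ge> u y0 - ?\<psi> y0" for y
    using max[of x0 "x0 - y"]
    by (simp add: m_def y0_def penalized_increment_def algebra_simps norm_minus_commute)
  have "u y0 = ?\<psi> y0"
    by (simp add: m_def y0_def penalized_increment_def norm_minus_commute)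
  note super_test = visc_superD[OF super is_C2_paraboloid touch_below this]
  have "(2 * - s) *\<^sub>R (y0 - (x0 - h)) = p" by (simp add: p_def y0_def algebra_simps)
  then have i2: "integrable q (nl_integrand grad \<beta> u p y0)"
    and r2: "lam * u y0 - a y0 * I2 - f y0 \<ge> 0"
    using super_test unfolding I2_def by simp_all
  have "nl_integrand grad \<beta> u p x0 z \<le> nl_integrand grad \<beta> u p y0 z" for z
    using max[of "x0 + \<beta> z" w0]
    by (simp add: nl_integrand_def penalized_increment_def y0_def algebra_simps)
  then have "I1 \<le> I2" unfolding I1_def I2_def using i1 i2 by (intro integral_mono) auto
  have "(lam * u x0 - f x0) / a x0 \<le> I1"
    using r1 assms(3) by (simp add: pos_divide_le_eq mult.commute)
  also have "\<dots> \<le> I2" by fact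
  also have "\<dots> \<le> (lam * u y0 - f y0) / a y0"
    using r2 assms(4) by (simp add: y0_def pos_le_divide_eq mult.commute)
  finally show ?thesis unfolding y0_def .
qed

lemma diff_le_of_quotient_le:
  fixes a1 a2 m1 m2 f1 f2 K :: real
  assumes "a1 > 0" "a2 > 0" "(m1 - f1) / a1 \<le> (m2 - f2) / a2" "\<bar>m2 - f2\<bar> \<le> K * a2"
  shows "m1 - m2 \<le> \<bar>f1 - f2\<bar> + \<bar>a1 - a2\<bar> * K"
proof -
  have "m1 - m2 \<le> (f1 - f2) + (a1 - a2) * ((m2 - f2) / a2)"
    using assms(1-3) by (simp add: field_simps)
  moreover have "\<bar>(m2 - f2) / a2\<bar> \<le> K"
    using assms(2,4) by (simp add: divide_le_eq)
  then have "(a1 - a2) * ((m2 - f2) / a2) \<le> \<bar>a1 - a2\<bar> * K"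
    by (metis abs_ge_self abs_ge_zero abs_mult mult_left_mono order_trans)
  ultimately show ?thesis by linarith
qed

lemma periodic_visc_sol_increment_le:
  fixes u :: "real^'n \<Rightarrow> real"
  assumes sol: "periodic_visc_sol grad \<beta> a f q lam u" and "lam > 0"
    and M: "\<And>y. \<bar>lam * u y\<bar> \<le> M" and F: "\<And>y. \<bar>f y\<bar> \<le> F"
    and "a0 > 0" "\<And>y. a y \<ge> a0"
  obtains x0 w where "norm w \<le> 3 * norm h"
    "lam * u x - lam * u (x - h) \<le> \<bar>f x0 - f (x0 - w)\<bar> + \<bar>a x0 - a (x0 - w)\<bar> * ((M + F) / a0)"
proof (cases "h = 0")
  case True
  then show thesis using that[of 0 x] by simp
next
  case False
  have cont: "continuous_on UNIV u" and per: "zperiodic u"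
    and sub: "visc_sub grad \<beta> a f q lam u" and super: "visc_super grad \<beta> a f q lam u"
    using sol by (auto simp: periodic_visc_sol_def)
  define s where "s = M / (lam * (norm h)\<^sup>2)"
  have "M \<ge> 0" using M[of 0] by linarith
  then have s: "s \<ge> 0" "M / lam \<le> s * (norm h)\<^sup>2"
    using \<open>lam > 0\<close> False by (simp_all add: s_def)
  have u_bd: "\<bar>u y\<bar> \<le> M / lam" for y
    using M[of y] \<open>lam > 0\<close> by (simp add: abs_mult pos_le_divide_eq mult.commute)
  obtain x0 w0 where max: "\<And>x w. penalized_increment u s h x w \<le> penalized_increment u s h x0 w0"
    and w0: "norm (w0 - h) \<le> 2 * norm h"
    using penalized_increment_attains_max[OF cont per u_bd s] by metis
  have "norm w0 \<le> 3 * norm h" using w0 norm_triangle_ineq[of "w0 - h" h] by simp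
  have "0 \<le> s * (norm (w0 - h))\<^sup>2" using s(1) by simp
  then have "u x - u (x - h) \<le> u x0 - u (x0 - w0)"
    using max[of x h] by (simp add: penalized_increment_def)
  then have "lam * u x - lam * u (x - h) \<le> lam * u x0 - lam * u (x0 - w0)"
    using \<open>lam > 0\<close> by (simp add: right_diff_distrib[symmetric])
  also have "\<dots> \<le> \<bar>f x0 - f (x0 - w0)\<bar> + \<bar>a x0 - a (x0 - w0)\<bar> * ((M + F) / a0)"
  proof (rule diff_le_of_quotient_le)
    show "a x0 > 0" "a (x0 - w0) > 0" using assms(5,6) by (auto intro: less_le_trans)
    show "(lam * u x0 - f x0) / a x0 \<le> (lam * u (x0 - w0) - f (x0 - w0)) / a (x0 - w0)"
      using doubling_max_comparison[OF sub super \<open>a x0 > 0\<close> \<open>a (x0 - w0) > 0\<close> max] .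
    have "\<bar>lam * u (x0 - w0) - f (x0 - w0)\<bar> \<le> ((M + F) / a0) * a0"
      using M[of "x0 - w0"] F[of "x0 - w0"] \<open>a0 > 0\<close> by simp
    also have "\<dots> \<le> ((M + F) / a0) * a (x0 - w0)"
      using \<open>M \<ge> 0\<close> F[of 0] assms(5,6) by (intro mult_left_mono) auto
    finally show "\<bar>lam * u (x0 - w0) - f (x0 - w0)\<bar> \<le> (M + F) / a0 * a (x0 - w0)" .
  qed
  finally show thesis using that \<open>norm w0 \<le> 3 * norm h\<close> by blast
qed

lemma powr_le_scaled_powr:
  fixes w d D t r :: real
  assumes "0 \<le> w" "w \<le> d" "d \<le> D" "0 \<le> t" "t \<le> r"
  shows "w powr r \<le> D powr (r - t) * d powr t"
proof -
  have "w powr r \<le> d powr r" using assms by (intro powr_mono2) auto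
  also have "\<dots> = d powr (r - t) * d powr t" by (simp add: powr_add[symmetric])
  also have "\<dots> \<le> D powr (r - t) * d powr t"
    using assms by (intro mult_right_mono powr_mono2) auto
  finally show ?thesis .
qed

lemma periodic_visc_sol_hoelder:
  fixes u :: "real^'n \<Rightarrow> real"
  assumes sol: "periodic_visc_sol grad \<beta> a f q lam u" and lam: "lam > 0"
    and M: "\<And>y. \<bar>lam * u y\<bar> \<le> M" and F: "\<And>y. \<bar>f y\<bar> \<le> F"
    and a0: "a0 > 0" "\<And>y. a y \<ge> a0" and "L \<ge> 0"
    and a_hoel: "\<And>y y'. \<bar>a y - a y'\<bar> \<le> L * norm (y - y') powr \<theta>1"
    and f_hoel: "\<And>y y'. \<bar>f y - f y'\<bar> \<le> L * norm (y - y') powr \<theta>2"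
    and "0 \<le> \<theta>" "\<theta> \<le> \<theta>1" "\<theta> \<le> \<theta>2" and "3 * norm (y - y') \<le> D"
  shows "\<bar>lam * u y - lam * u y'\<bar>
           \<le> L * (D powr (\<theta>2 - \<theta>) + (M + F) / a0 * D powr (\<theta>1 - \<theta>)) * (3 * norm (y - y')) powr \<theta>"
proof -
  let ?C = "L * (D powr (\<theta>2 - \<theta>) + (M + F) / a0 * D powr (\<theta>1 - \<theta>))"
  have "M \<ge> 0" "F \<ge> 0" using M[of 0] F[of 0] by linarith+
  then have K: "(M + F) / a0 \<ge> 0" using a0(1) by simp
  have one_sided: "lam * u x - lam * u (x - h) \<le> ?C * (3 * norm h) powr \<theta>"
    if "3 * norm h \<le> D" for x h
  proof -
    obtain x0 w where w: "norm w \<le> 3 * norm h" and incr: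
      "lam * u x - lam * u (x - h) \<le> \<bar>f x0 - f (x0 - w)\<bar> + \<bar>a x0 - a (x0 - w)\<bar> * ((M + F) / a0)"
      using periodic_visc_sol_increment_le[OF sol lam M F a0] by blast
    have "\<bar>f x0 - f (x0 - w)\<bar> \<le> L * norm w powr \<theta>2" using f_hoel[of x0 "x0 - w"] by simp
    also have "\<dots> \<le> L * (D powr (\<theta>2 - \<theta>) * (3 * norm h) powr \<theta>)"
      by (intro mult_left_mono powr_le_scaled_powr) (use w that assms in auto)
    finally have f_osc: "\<bar>f x0 - f (x0 - w)\<bar> \<le> L * (D powr (\<theta>2 - \<theta>) * (3 * norm h) powr \<theta>)" .
    have "\<bar>a x0 - a (x0 - w)\<bar> \<le> L * norm w powr \<theta>1" using a_hoel[of x0 "x0 - w"] by simp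
    also have "\<dots> \<le> L * (D powr (\<theta>1 - \<theta>) * (3 * norm h) powr \<theta>)"
      by (intro mult_left_mono powr_le_scaled_powr) (use w that assms in auto)
    finally have "\<bar>a x0 - a (x0 - w)\<bar> * ((M + F) / a0)
        \<le> L * (D powr (\<theta>1 - \<theta>) * (3 * norm h) powr \<theta>) * ((M + F) / a0)"
      using K by (rule mult_right_mono)
    with incr f_osc show ?thesis by (simp add: algebra_simps)
  qed
  show ?thesis
    using one_sided[where x = y and h = "y - y'"] one_sided[where x = y' and h = "y' - y"]
      \<open>3 * norm (y - y') \<le> D\<close>
    by (simp add: abs_le_iff norm_minus_commute)
qed

theorem lemma3p2:
  fixes \<beta> :: "real^'m \<Rightarrow> real^'n"
    and a f0 :: "real^'n \<Rightarrow> real"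
    and q :: "(real^'m) measure"
    and v :: "real \<Rightarrow> real^'n \<Rightarrow> real"
    and grad :: bool
    and B1 a0 L \<theta>1 \<theta>2 :: real
  assumes dims: "CARD('m) \<le> CARD('n)"
    and beta_cont: "continuous_on UNIV \<beta>"
    and beta_hom: "\<And>c z. c > 0 \<Longrightarrow> \<beta> (c *\<^sub>R z) = c *\<^sub>R \<beta> z"
    and beta_bd: "\<And>z. norm (\<beta> z) \<le> B1 * norm z"
    and a_cont: "continuous_on UNIV a" and a_per: "zperiodic a"
    and a0: "a0 > 0" and a_low: "\<And>y. a y \<ge> a0"
    and th1: "0 < \<theta>1" "\<theta>1 \<le> 1"
    and a_hoel: "\<And>y y'. \<bar>a y - a y'\<bar> \<le> L * norm (y - y') powr \<theta>1"
    and f_per: "zperiodic f0"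
    and th2: "0 < \<theta>2" "\<theta>2 \<le> 1"
    and f_hoel: "\<And>y y'. \<bar>f0 y - f0 y'\<bar> \<le> L * norm (y - y') powr \<theta>2"
    and q_borel: "sets q = sets borel"
    and q_locfin: "\<And>K. compact K \<Longrightarrow> 0 \<notin> K \<Longrightarrow> emeasure q K < \<infinity>"
    and q_B: "condB \<beta> q"
    and q_moment: "(\<integral>\<^sup>+ z. ennreal (if norm z < 1 then norm z ^ (if grad then 2 else 1)
                                  else norm z ^ ((if grad then 2 else 1) - 1)) \<partial>q) < \<infinity>"
    and v_sol: "\<And>lam. lam > 0 \<Longrightarrow> periodic_visc_sol grad \<beta> a f0 q lam (v lam)"
  shows "(\<exists>M0>0. \<forall>lam\<in>{0<..<1}. \<forall>y. \<bar>lam * v lam y\<bar> \<le> M0) \<and>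
         (\<forall>\<theta>. 0 < \<theta> \<and> \<theta> < min \<theta>1 \<theta>2 \<longrightarrow>
            (\<exists>C>0. \<forall>lam\<in>{0<..<1}. \<forall>y\<in>torus. \<forall>y'\<in>torus.
               \<bar>lam * v lam y - lam * v lam y'\<bar> \<le> C * norm (y - y') powr \<theta>))"
proof -
  have L: "L \<ge> 0" by (rule hoelder_constant_nonneg[OF a_hoel])
  obtain F where F: "\<And>y. \<bar>f0 y\<bar> \<le> F"
    using zperiodic_hoelder_bounded[OF f_per f_hoel] th2 by force
  have "F \<ge> 0" using F[of 0] by linarith
  have a_nonneg: "\<And>y. a y \<ge> 0" using a0 a_low by (meson less_le_trans less_imp_le)
  have bounded: "\<bar>lam * v lam y\<bar> \<le> F" if "lam > 0" for lam y
    by (rule periodic_visc_sol_bounded[OF v_sol[OF that] a_nonneg F that])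
  define D where "D = 3 * diameter (torus :: (real^'n) set)"
  have D: "3 * norm (y - y') \<le> D" if "y \<in> torus" "y' \<in> torus" for y y' :: "real^'n"
    using diameter_bounded_bound[OF compact_imp_bounded[OF compact_torus] that]
    by (simp add: D_def dist_norm)
  have "\<exists>C>0. \<forall>lam\<in>{0<..<1}. \<forall>y\<in>torus. \<forall>y'\<in>torus.
          \<bar>lam * v lam y - lam * v lam y'\<bar> \<le> C * norm (y - y') powr \<theta>"
    if "0 < \<theta>" "\<theta> < min \<theta>1 \<theta>2" for \<theta>
  proof (intro exI conjI ballI)
    define C0 where "C0 = L * (D powr (\<theta>2 - \<theta>) + (F + F) / a0 * D powr (\<theta>1 - \<theta>))"
    have "C0 \<ge> 0" using L \<open>F \<ge> 0\<close> a0 by (simp add: C0_def)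
    then show "C0 * 3 powr \<theta> + 1 > 0" by (simp add: add_nonneg_pos)
    fix lam :: real and y y' :: "real^'n" assume "lam \<in> {0<..<1}" "y \<in> torus" "y' \<in> torus"
    then have "\<bar>lam * v lam y - lam * v lam y'\<bar> \<le> C0 * (3 * norm (y - y')) powr \<theta>"
      unfolding C0_def using that D
      by (intro periodic_visc_sol_hoelder[OF v_sol _ bounded F a0 a_low L a_hoel f_hoel]) auto
    also have "\<dots> \<le> (C0 * 3 powr \<theta> + 1) * norm (y - y') powr \<theta>"
      by (simp add: powr_mult algebra_simps)
    finally show "\<bar>lam * v lam y - lam * v lam y'\<bar> \<le> (C0 * 3 powr \<theta> + 1) * norm (y - y') powr \<theta>" .
  qed
  moreover have "\<exists>M0>0. \<forall>lam\<in>{0<..<1}. \<forall>y. \<bar>lam * v lam y\<bar> \<le> M0"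
  proof (intro exI[of _ "F + 1"] conjI ballI allI)
    show "F + 1 > 0" using \<open>F \<ge> 0\<close> by simp
    fix lam :: real and y assume "lam \<in> {0<..<1}"
    then show "\<bar>lam * v lam y\<bar> \<le> F + 1" using bounded[of lam y] by simp
  qed
  ultimately show ?thesis by blast
qed

end
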